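(* Let $p\ge1$, $q\ge 2$, and let $A_1,\dots,A_q\in\mathbb{R}^{p\times p}$ be symmetric matrices such that, with $A_\eta=\sum_{i=1}^q\eta_iA_i$, one has $A_\eta^3=|\eta|^2A_\eta$ for all $\eta\in\mathbb{R}^q$. Then: (i) there are nonnegative integers $\nu,\mu$ with $2\nu+\mu=p$ such that for every $\eta\in\mathbb{R}^q\setminus\{0\}$ and every $i\in\{1,\dots,q\}$, the matrices $\frac{1}{|\eta|}A_\eta$ and $A_i$ have eigenvalues $1$ and $-1$ each of multiplicity $\nu$ and eigenvalue $0$ of multiplicity $\mu$; (ii) $\operatorname{trace}A_i=0$ for all $i$; (iii) $A_i^3=A_i$ for all $i$; (iv) for any $s,t\in\mathbb{R}^q$ with $\langle s,t\rangle=0$, $A_s^2A_t+A_sA_tA_s+A_tA_s^2=|s|^2A_t$.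
   Context: $|\cdot|$ and $\langle\cdot,\cdot\rangle$ denote the standard Euclidean norm and inner product on $\mathbb{R}^q$. *)

theory Defs
  imports "Jordan_Normal_Form.Char_Poly" "HOL-Computational_Algebra.Polynomial"
begin

text \<open>Indices 1..q of the paper are rendered as 0..<q; vectors eta in R^q as functions
  nat => real (only the values at 0..<q matter).\<close>

definition Aeta :: "nat \<Rightarrow> nat \<Rightarrow> (nat \<Rightarrow> real mat) \<Rightarrow> (nat \<Rightarrow> real) \<Rightarrow> real mat" where
  "Aeta p q A \<eta> = mat p p (\<lambda>(j,k). \<Sum>i<q. \<eta> i * A i $$ (j,k))"

definition sqnorm :: "nat \<Rightarrow> (nat \<Rightarrow> real) \<Rightarrow> real" where
  "sqnorm q \<eta> = (\<Sum>i<q. (\<eta> i)^2)"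

definition inner_q :: "nat \<Rightarrow> (nat \<Rightarrow> real) \<Rightarrow> (nat \<Rightarrow> real) \<Rightarrow> real" where
  "inner_q q s t = (\<Sum>i<q. s i * t i)"

definition eig_mult :: "real mat \<Rightarrow> real \<Rightarrow> nat" where
  "eig_mult M c = order c (char_poly M)"

definition mat_trace :: "real mat \<Rightarrow> real" where
  "mat_trace M = (\<Sum>i<dim_row M. M $$ (i,i))"

end

theory Submission
  imports Defs "Jordan_Normal_Form.Schur_Decomposition" "HOL-Analysis.Elementary_Normed_Spaces"
begin

text \<open>For \<open>\<eta> \<noteq> 0\<close> the matrix \<open>M\<^sub>\<eta> = A\<^sub>\<eta> / |\<eta>|\<close> satisfies \<open>M\<^sub>\<eta>\<^sup>3 = M\<^sub>\<eta>\<close>, so its eigenvalues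
  lie in \<open>{-1, 0, 1}\<close>, and their multiplicities \<open>n\<^sub>1, n\<^sub>-\<^sub>1, n\<^sub>0\<close> are determined by \<open>p\<close>,
  \<open>tr M\<^sub>\<eta> = n\<^sub>1 - n\<^sub>-\<^sub>1\<close> and \<open>tr M\<^sub>\<eta>\<^sup>2 = n\<^sub>1 + n\<^sub>-\<^sub>1\<close>. Both traces depend continuously on \<open>\<eta>\<close> and
  take only finitely many values, so they are constant along every line missing the origin.
  Two independent vectors \<open>\<eta>, \<zeta>\<close> lie on the lines \<open>\<eta> + \<real>\<zeta>\<close> and \<open>\<zeta> + \<real>\<eta>\<close>, which miss the
  origin and meet at \<open>\<eta> + \<zeta>\<close>; for \<open>q \<ge> 2\<close> every nonzero vector is independent of \<open>e\<^sub>0\<close> or of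
  \<open>e\<^sub>1\<close>, so the traces are constant on \<open>\<real>\<^sup>q - {0}\<close>. As \<open>M\<^sub>-\<^sub>\<eta> = -M\<^sub>\<eta>\<close>, the first trace
  vanishes, whence \<open>n\<^sub>1 = n\<^sub>-\<^sub>1\<close>. Part (iv) is the coefficient of \<open>z\<close> in
  \<open>A\<^sub>s\<^sub>+\<^sub>z\<^sub>t\<^sup>3 = (|s|\<^sup>2 + z\<^sup>2|t|\<^sup>2) A\<^sub>s\<^sub>+\<^sub>z\<^sub>t\<close> for \<open>s \<bottom> t\<close>.\<close>

lemma one_smult_mat: "(1 :: 'a :: monoid_mult) \<cdot>\<^sub>m M = M"
  by (auto intro!: eq_matI)

lemma smult_smult_mat: "a \<cdot>\<^sub>m (b \<cdot>\<^sub>m M) = (a * b :: 'a :: semigroup_mult) \<cdot>\<^sub>m M"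
  by (auto intro!: eq_matI simp: mult.assoc)

lemma pow_mat_smult:
  fixes M :: "'a :: comm_semiring_1 mat"
  assumes M: "M \<in> carrier_mat n n"
  shows "(c \<cdot>\<^sub>m M) ^\<^sub>m k = c ^ k \<cdot>\<^sub>m M ^\<^sub>m k"
proof (induction k)
  case 0
  show ?case using M by (auto intro!: eq_matI)
next
  case (Suc k)
  have "(c \<cdot>\<^sub>m M) ^\<^sub>m Suc k = c ^ k \<cdot>\<^sub>m (M ^\<^sub>m k * (c \<cdot>\<^sub>m M))"
    using Suc M by (simp add: mult_smult_assoc_mat[of "M ^\<^sub>m k" n n "c \<cdot>\<^sub>m M" n])
  also have "\<dots> = c ^ Suc k \<cdot>\<^sub>m M ^\<^sub>m Suc k"
    using M by (auto intro!: eq_matI simp: mult_smult_distrib[of _ n n] ac_simps)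
  finally show ?case .
qed

lemma pow_mat_2: "M \<in> carrier_mat n n \<Longrightarrow> M ^\<^sub>m 2 = M * M"
  by (simp add: numeral_2_eq_2)

lemma pow_mat_3: "M \<in> carrier_mat n n \<Longrightarrow> M ^\<^sub>m 3 = M * M * M"
  by (simp add: numeral_3_eq_3)

lemma index_mult3_mat:
  fixes X Y Z :: "'a :: comm_semiring_0 mat"
  assumes "X \<in> carrier_mat n n" "Y \<in> carrier_mat n n" "Z \<in> carrier_mat n n" "j < n" "k < n"
  shows "(X * Y * Z) $$ (j, k) = (\<Sum>l<n. \<Sum>m<n. X $$ (j, l) * Y $$ (l, m) * Z $$ (m, k))"
  using assms by (simp add: scalar_prod_def atLeast0LessThan sum_distrib_left mult.assoc)

lemma mat_trace_smult: "M \<in> carrier_mat n n \<Longrightarrow> mat_trace (c \<cdot>\<^sub>m M) = c * mat_trace M"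
  by (auto simp: mat_trace_def sum_distrib_left intro!: sum.cong)

lemma mat_trace_mult_comm:
  assumes A: "A \<in> carrier_mat n m" and B: "B \<in> carrier_mat m n"
  shows "mat_trace (A * B) = mat_trace (B * A)"
proof -
  have "mat_trace (A * B) = (\<Sum>i<n. \<Sum>k<m. A $$ (i, k) * B $$ (k, i))"
    unfolding mat_trace_def using A B
    by (auto simp: scalar_prod_def atLeast0LessThan intro!: sum.cong)
  also have "\<dots> = (\<Sum>k<m. \<Sum>i<n. B $$ (k, i) * A $$ (i, k))"
    by (subst sum.swap) (simp add: mult.commute)
  also have "\<dots> = mat_trace (B * A)"
    unfolding mat_trace_def using A B
    by (auto simp: scalar_prod_def atLeast0LessThan intro!: sum.cong)
  finally show ?thesis .
qed

lemma mat_trace_similar: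
  assumes "similar_mat_wit M B P Q"
  shows "mat_trace M = mat_trace B"
proof -
  define n where "n = dim_row M"
  note wit = similar_mat_witD[OF n_def assms]
  have "mat_trace M = mat_trace (P * (B * Q))"
    using wit by (simp add: assoc_mult_mat[of _ n n])
  also have "\<dots> = mat_trace (B * Q * P)"
    using wit by (intro mat_trace_mult_comm[of _ n n]) auto
  also have "\<dots> = mat_trace B"
    using wit by (simp add: assoc_mult_mat[of _ n n])
  finally show ?thesis .
qed

lemma mat_trace_diag_mat: "mat_trace M = sum_list (diag_mat M)"
  by (simp add: mat_trace_def diag_mat_def sum_list_sum_nth atLeast0LessThan)

lemma upper_triangular_mult_diag:
  fixes B C :: "'a :: comm_semiring_0 mat"
  assumes B: "B \<in> carrier_mat n n" and C: "C \<in> carrier_mat n n"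
    and ut: "upper_triangular B" "upper_triangular C" and i: "i < n"
  shows "(B * C) $$ (i, i) = B $$ (i, i) * C $$ (i, i)"
proof -
  have "(B * C) $$ (i, i) = (\<Sum>k\<in>{0..<n}. B $$ (i, k) * C $$ (k, i))"
    using B C i by (simp add: scalar_prod_def)
  also have "\<dots> = (\<Sum>k\<in>{0..<n}. if k = i then B $$ (i, i) * C $$ (i, i) else 0)"
    using ut B C i by (intro sum.cong) (auto simp: upper_triangular_def linorder_neq_iff)
  finally show ?thesis using i by simp
qed

lemma mat_trace_char_poly_roots:
  fixes M :: "real mat"
  assumes M: "M \<in> carrier_mat n n" and cp: "char_poly M = (\<Prod>e\<leftarrow>es. [:-e, 1:])"
  shows "mat_trace M = sum_list es" and "mat_trace (M * M) = (\<Sum>e\<leftarrow>es. e\<^sup>2)"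
proof -
  obtain B P Q where sd: "schur_decomposition M es = (B, P, Q)"
    by (cases "schur_decomposition M es") auto
  from schur_decomposition[OF M cp sd]
  have wit: "similar_mat_wit M B P Q" and ut: "upper_triangular B" and dg: "diag_mat B = es"
    by auto
  have B: "B \<in> carrier_mat n n"
    using similar_mat_witD(5)[OF _ wit] M by auto
  show "mat_trace M = sum_list es"
    using mat_trace_similar[OF wit] dg by (simp add: mat_trace_diag_mat)
  have "mat_trace (M * M) = mat_trace (B * B)"
    using mat_trace_similar[OF similar_mat_wit_pow[OF wit, of 2]] pow_mat_2[OF M] pow_mat_2[OF B]
    by simp
  also have "\<dots> = (\<Sum>i<n. (B $$ (i, i))\<^sup>2)"
    using upper_triangular_mult_diag[OF B B ut ut] B by (simp add: mat_trace_def power2_eq_square)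
  also have "\<dots> = (\<Sum>e\<leftarrow>es. e\<^sup>2)"
    using B by (simp add: dg[symmetric] diag_mat_def sum_list_sum_nth atLeast0LessThan)
  finally show "mat_trace (M * M) = (\<Sum>e\<leftarrow>es. e\<^sup>2)" .
qed

lemma continuous_on_mat_trace:
  fixes F :: "'a :: topological_space \<Rightarrow> real mat"
  assumes carrier: "\<And>x. F x \<in> carrier_mat n n"
    and entries: "\<And>j k. j < n \<Longrightarrow> k < n \<Longrightarrow> continuous_on S (\<lambda>x. F x $$ (j, k))"
  shows "continuous_on S (\<lambda>x. mat_trace (F x))"
    and "continuous_on S (\<lambda>x. mat_trace (F x * F x))"
proof -
  have "mat_trace (F x) = (\<Sum>j<n. F x $$ (j, j))"
    and "mat_trace (F x * F x) = (\<Sum>j<n. \<Sum>k<n. F x $$ (j, k) * F x $$ (k, j))" for x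
    using carrier[of x] by (auto simp: mat_trace_def scalar_prod_def atLeast0LessThan)
  then show "continuous_on S (\<lambda>x. mat_trace (F x))"
    and "continuous_on S (\<lambda>x. mat_trace (F x * F x))"
    using entries by (auto intro!: continuous_intros)
qed

section \<open>Matrices with \<open>M\<^sup>3 = M\<close>\<close>

lemma cube_eq_self_iff: "(a :: 'a :: idom) ^ 3 = a \<longleftrightarrow> a \<in> {-1, 0, 1}"
proof -
  have "a ^ 3 - a = a * (a - 1) * (a + 1)" by (simp add: algebra_simps power3_eq_cube)
  then show ?thesis by (auto simp: eq_neg_iff_add_eq_0 power3_eq_cube)
qed

lemma eigenvalue_cube_eq_self:
  fixes M :: "'a :: idom mat"
  assumes M: "M \<in> carrier_mat n n" and cube: "M ^\<^sub>m 3 = M" and ev: "eigenvalue M a"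
  shows "a \<in> {-1, 0, 1}"
proof -
  obtain v where v: "eigenvector M v a" using ev unfolding eigenvalue_def ..
  then have "a ^ 3 \<cdot>\<^sub>v v = a \<cdot>\<^sub>v v"
    using eigenvector_pow[OF M v, of 3] cube unfolding eigenvector_def by simp
  moreover obtain i where "i < dim_vec v" "v $ i \<noteq> 0"
    using v M unfolding eigenvector_def by force
  ultimately have "a ^ 3 = a"
    by (metis index_smult_vec(1) mult_cancel_right)
  then show ?thesis by (simp add: cube_eq_self_iff)
qed

lemma char_poly_cube_eq_self:
  fixes M :: "real mat"
  assumes M: "M \<in> carrier_mat n n" and cube: "M ^\<^sub>m 3 = M"
  obtains es where "char_poly M = (\<Prod>e\<leftarrow>es. [:-e, 1:])" "length es = n" "set es \<subseteq> {-1, 0, 1}"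
proof -
  interpret of_real_poly: map_poly_inj_comm_ring_hom "of_real :: real \<Rightarrow> complex" ..
  define Mc where "Mc = map_mat complex_of_real M"
  have Mc: "Mc \<in> carrier_mat n n" using M by (simp add: Mc_def)
  have Mc_cube: "Mc ^\<^sub>m 3 = Mc"
    using cube M unfolding Mc_def by (metis of_real_hom.mat_hom_pow)
  obtain as where as: "char_poly Mc = (\<Prod>a\<leftarrow>as. [:-a, 1:])" "length as = n"
    using char_poly_factorized[OF Mc] by blast
  have roots: "a \<in> {-1, 0, 1}" if "a \<in> set as" for a
  proof (rule eigenvalue_cube_eq_self[OF Mc Mc_cube])
    have "poly (char_poly Mc) a = 0"
      unfolding as(1) using that by (simp add: poly_prod_list prod_list_zero_iff)
    then show "eigenvalue Mc a" using eigenvalue_root_char_poly[OF Mc] by simp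
  qed
  define es where "es = map Re as"
  have as_es: "as = map of_real es"
    unfolding es_def map_map by (rule sym, rule map_idI) (use roots in force)
  have "map_poly of_real (char_poly M) = char_poly Mc"
    unfolding Mc_def by (rule of_real_hom.char_poly_hom[OF M, symmetric])
  also have "\<dots> = (\<Prod>e\<leftarrow>es. [:-of_real e, 1:])"
    unfolding as(1) as_es by (simp add: o_def)
  also have "\<dots> = map_poly of_real (\<Prod>e\<leftarrow>es. [:-e, 1:])"
    by (simp add: of_real_poly.hom_prod_list o_def del: of_real_poly.prod_list_map_hom)
  finally have "char_poly M = (\<Prod>e\<leftarrow>es. [:-e, 1:])"
    by (simp only: of_real_poly.eq_iff)
  moreover have "set es \<subseteq> {-1, 0, 1}" "length es = n"
    using roots as(2) unfolding es_def by force+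
  ultimately show ?thesis using that by blast
qed

lemma order_prod_linear_factors:
  "Polynomial.order a (\<Prod>e\<leftarrow>es. [:-e, 1:]) = count_list es (a :: 'a :: idom)"
proof (induction es)
  case (Cons e es)
  have "(\<Prod>e\<leftarrow>es. [:-e, 1:]) \<noteq> (0 :: 'a poly)" by (simp only: prod_list_zero_iff) auto
  then have nz: "[:-e, 1:] * (\<Prod>e\<leftarrow>es. [:-e, 1:]) \<noteq> 0" by (simp only: mult_eq_0_iff) simp
  show ?case
    using Cons.IH unfolding list.map prod_list.Cons order_mult[OF nz] by (simp add: order_linear')
qed simp

lemma eig_mult_cube_eq_self:
  fixes M :: "real mat"
  assumes M: "M \<in> carrier_mat n n" and cube: "M ^\<^sub>m 3 = M"
  shows "eig_mult M 1 + eig_mult M (-1) + eig_mult M 0 = n"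
    and "mat_trace M = real (eig_mult M 1) - real (eig_mult M (-1))"
    and "mat_trace (M * M) = real (eig_mult M 1) + real (eig_mult M (-1))"
proof -
  obtain es where es: "char_poly M = (\<Prod>e\<leftarrow>es. [:-e, 1:])" "length es = n" "set es \<subseteq> {-1, 0, 1}"
    using char_poly_cube_eq_self[OF M cube] .
  have mult: "eig_mult M c = count_list es c" for c
    unfolding eig_mult_def es(1) by (rule order_prod_linear_factors)
  have "length es = count_list es 1 + count_list es (-1) + count_list es 0
    \<and> sum_list es = real (count_list es 1) - real (count_list es (-1))
    \<and> (\<Sum>e\<leftarrow>es. e\<^sup>2) = real (count_list es 1) + real (count_list es (-1))"
    using es(3) by (induction es) auto
  then show "eig_mult M 1 + eig_mult M (-1) + eig_mult M 0 = n"
    and "mat_trace M = real (eig_mult M 1) - real (eig_mult M (-1))"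
    and "mat_trace (M * M) = real (eig_mult M 1) + real (eig_mult M (-1))"
    using mat_trace_char_poly_roots[OF M es(1)] es(2) by (simp_all add: mult)
qed

section \<open>Functions constant along lines\<close>

definition std_basis :: "nat \<Rightarrow> nat \<Rightarrow> real" where
  "std_basis k i = (if i = k then 1 else 0)"

definition indep_pair :: "nat \<Rightarrow> (nat \<Rightarrow> real) \<Rightarrow> (nat \<Rightarrow> real) \<Rightarrow> bool" where
  "indep_pair q \<eta> \<zeta> \<longleftrightarrow> (\<forall>a b. (\<forall>i<q. a * \<eta> i + b * \<zeta> i = 0) \<longrightarrow> a = 0 \<and> b = 0)"

lemma indep_pair_commute: "indep_pair q \<eta> \<zeta> \<longleftrightarrow> indep_pair q \<zeta> \<eta>"
proof -
  have swap: "(\<forall>i<q. a * \<zeta> i + b * \<eta> i = 0) \<longleftrightarrow> (\<forall>i<q. b * \<eta> i + a * \<zeta> i = 0)" for a b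
    by (simp add: add.commute)
  show ?thesis unfolding indep_pair_def swap by blast
qed

lemma indep_pair_line_nonzero:
  assumes "indep_pair q \<eta> \<zeta>"
  shows "\<exists>i<q. \<eta> i + x * \<zeta> i \<noteq> 0"
proof (rule ccontr)
  assume "\<not> ?thesis"
  then have "\<forall>i<q. 1 * \<eta> i + x * \<zeta> i = 0" by simp
  with assms have "(1 :: real) = 0" unfolding indep_pair_def by blast
  then show False by simp
qed

lemma indep_pair_std_basis:
  assumes "1 < q"
  shows "indep_pair q (std_basis 1) (std_basis 0)"
  unfolding indep_pair_def
proof (intro allI impI)
  fix a b assume h: "\<forall>j<q. a * std_basis 1 j + b * std_basis 0 j = 0"
  show "a = 0 \<and> b = 0"
    using h[rule_format, of 0] h[rule_format, of 1] assms by (simp add: std_basis_def)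
qed

lemma indep_pair_std_basis_cases:
  assumes "1 < q" and "\<exists>i<q. \<eta> i \<noteq> 0"
  shows "indep_pair q \<eta> (std_basis 0) \<or> indep_pair q \<eta> (std_basis 1)"
proof (cases "\<exists>i. 0 < i \<and> i < q \<and> \<eta> i \<noteq> 0")
  case True
  then obtain i where i: "0 < i" "i < q" "\<eta> i \<noteq> 0" by blast
  have "indep_pair q \<eta> (std_basis 0)"
    unfolding indep_pair_def
  proof (intro allI impI)
    fix a b assume h: "\<forall>j<q. a * \<eta> j + b * std_basis 0 j = 0"
    from h[rule_format, OF i(2)] i have "a = 0" by (simp add: std_basis_def)
    with h[rule_format, of 0] i show "a = 0 \<and> b = 0" by (simp add: std_basis_def)
  qed
  then show ?thesis ..
next
  case False
  with assms have "\<eta> 0 \<noteq> 0" "\<eta> 1 = 0" by auto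
  have "indep_pair q \<eta> (std_basis 1)"
    unfolding indep_pair_def
  proof (intro allI impI)
    fix a b assume h: "\<forall>j<q. a * \<eta> j + b * std_basis 1 j = 0"
    from h[rule_format, of 0] \<open>\<eta> 0 \<noteq> 0\<close> \<open>1 < q\<close> have "a = 0" by (simp add: std_basis_def)
    with h[rule_format, of 1] \<open>\<eta> 1 = 0\<close> \<open>1 < q\<close> show "a = 0 \<and> b = 0" by (simp add: std_basis_def)
  qed
  then show ?thesis ..
qed

context
  fixes q :: nat and F :: "(nat \<Rightarrow> real) \<Rightarrow> real" and V :: "real set"
  assumes continuous_on_lines:
      "\<And>\<eta> \<zeta>. indep_pair q \<eta> \<zeta> \<Longrightarrow> continuous_on UNIV (\<lambda>x. F (\<lambda>i. \<eta> i + x * \<zeta> i))"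
    and finite_values: "finite V"
    and takes_values: "\<And>\<eta>. \<exists>i<q. \<eta> i \<noteq> 0 \<Longrightarrow> F \<eta> \<in> V"
begin

lemma eq_along_indep_line:
  assumes indep: "indep_pair q \<eta> \<zeta>"
  shows "F \<eta> = F (\<lambda>i. \<eta> i + \<zeta> i)"
proof -
  have "finite (range (\<lambda>x. F (\<lambda>i. \<eta> i + x * \<zeta> i)))"
    by (rule finite_subset[OF _ finite_values])
      (auto intro: takes_values indep_pair_line_nonzero[OF indep])
  then have "(\<lambda>x. F (\<lambda>i. \<eta> i + x * \<zeta> i)) constant_on UNIV"
    by (intro continuous_finite_range_constant connected_UNIV continuous_on_lines[OF indep])
  then obtain c where c: "\<And>x. F (\<lambda>i. \<eta> i + x * \<zeta> i) = c"
    unfolding constant_on_def by blast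
  from c[of 0] c[of 1] show ?thesis by simp
qed

lemma eq_if_indep_pair:
  assumes "indep_pair q \<eta> \<zeta>"
  shows "F \<eta> = F \<zeta>"
proof -
  have "F \<zeta> = F (\<lambda>i. \<zeta> i + \<eta> i)"
    using assms indep_pair_commute eq_along_indep_line by blast
  also have "(\<lambda>i. \<zeta> i + \<eta> i) = (\<lambda>i. \<eta> i + \<zeta> i)"
    by (simp add: add.commute)
  finally show ?thesis using eq_along_indep_line[OF assms] by simp
qed

lemma eq_on_nonzero:
  assumes q: "2 \<le> q" and "\<exists>i<q. \<eta> i \<noteq> 0" and "\<exists>i<q. \<eta>' i \<noteq> 0"
  shows "F \<eta> = F \<eta>'"
proof -
  have to_std_basis_0: "F \<eta> = F (std_basis 0)" if nz: "\<exists>i<q. \<eta> i \<noteq> 0" for \<eta>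
  proof -
    have "1 < q" using q by simp
    with nz consider "indep_pair q \<eta> (std_basis 0)" | "indep_pair q \<eta> (std_basis 1)"
      using indep_pair_std_basis_cases by blast
    then show ?thesis
    proof cases
      case 2
      then have "F \<eta> = F (std_basis 1)" by (rule eq_if_indep_pair)
      also have "\<dots> = F (std_basis 0)"
        using q by (intro eq_if_indep_pair indep_pair_std_basis) simp
      finally show ?thesis .
    qed (rule eq_if_indep_pair)
  qed
  show ?thesis using to_std_basis_0[OF assms(2)] to_std_basis_0[OF assms(3)] by simp
qed

end

section \<open>The pencil \<open>A\<^sub>\<eta>\<close>\<close>

lemma dim_row_Aeta [simp]: "dim_row (Aeta p q A \<eta>) = p"
  and dim_col_Aeta [simp]: "dim_col (Aeta p q A \<eta>) = p"
  by (simp_all add: Aeta_def)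

lemma Aeta_carrier [simp]: "Aeta p q A \<eta> \<in> carrier_mat p p"
  by (simp add: carrier_matI)

lemma index_Aeta: "j < p \<Longrightarrow> k < p \<Longrightarrow> Aeta p q A \<eta> $$ (j, k) = (\<Sum>i<q. \<eta> i * A i $$ (j, k))"
  by (simp add: Aeta_def)

lemma Aeta_line: "Aeta p q A (\<lambda>i. s i + z * t i) = Aeta p q A s + z \<cdot>\<^sub>m Aeta p q A t"
  by (rule eq_matI) (simp_all add: index_Aeta sum.distrib sum_distrib_left algebra_simps)

lemma Aeta_uminus: "Aeta p q A (\<lambda>i. - \<eta> i) = (-1) \<cdot>\<^sub>m Aeta p q A \<eta>"
  by (rule eq_matI) (auto simp: index_Aeta sum_negf)

lemma Aeta_std_basis:
  assumes "k < q" and "A k \<in> carrier_mat p p"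
  shows "Aeta p q A (std_basis k) = A k"
proof (rule eq_matI)
  fix j l assume "j < dim_row (A k)" "l < dim_col (A k)"
  moreover have "std_basis k i * A i $$ (j, l) = (if i = k then A k $$ (j, l) else 0)" for i
    by (simp add: std_basis_def)
  ultimately show "Aeta p q A (std_basis k) $$ (j, l) = A k $$ (j, l)"
    using assms by (simp add: index_Aeta)
qed (use assms in auto)

lemma sqnorm_line: "sqnorm q (\<lambda>i. s i + z * t i) = sqnorm q s + 2 * z * inner_q q s t + z\<^sup>2 * sqnorm q t"
  unfolding sqnorm_def inner_q_def
  by (simp add: power2_sum sum.distrib sum_distrib_left power_mult_distrib algebra_simps)

lemma sqnorm_uminus: "sqnorm q (\<lambda>i. - \<eta> i) = sqnorm q \<eta>"
  by (simp add: sqnorm_def)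

lemma sqnorm_std_basis:
  assumes "k < q"
  shows "sqnorm q (std_basis k) = 1"
proof -
  have "(std_basis k i)\<^sup>2 = (if i = k then 1 else 0)" for i
    by (simp add: std_basis_def)
  then show ?thesis using assms by (simp add: sqnorm_def)
qed

lemma sqnorm_pos:
  assumes "\<exists>i<q. \<eta> i \<noteq> 0"
  shows "0 < sqnorm q \<eta>"
proof -
  obtain i where i: "i < q" "\<eta> i \<noteq> 0" using assms by blast
  have "0 < (\<eta> i)\<^sup>2" using i by simp
  also have "\<dots> \<le> sqnorm q \<eta>" unfolding sqnorm_def by (rule member_le_sum) (use i in auto)
  finally show ?thesis .
qed

definition Aeta_unit :: "nat \<Rightarrow> nat \<Rightarrow> (nat \<Rightarrow> real mat) \<Rightarrow> (nat \<Rightarrow> real) \<Rightarrow> real mat" where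
  "Aeta_unit p q A \<eta> = (1 / sqrt (sqnorm q \<eta>)) \<cdot>\<^sub>m Aeta p q A \<eta>"

lemma Aeta_unit_carrier [simp]: "Aeta_unit p q A \<eta> \<in> carrier_mat p p"
  by (simp add: Aeta_unit_def)

lemma Aeta_unit_uminus: "Aeta_unit p q A (\<lambda>i. - \<eta> i) = (-1) \<cdot>\<^sub>m Aeta_unit p q A \<eta>"
  by (rule eq_matI) (auto simp: Aeta_unit_def Aeta_uminus sqnorm_uminus)

lemma Aeta_unit_std_basis:
  assumes "k < q" and "A k \<in> carrier_mat p p"
  shows "Aeta_unit p q A (std_basis k) = A k"
  using assms by (simp add: Aeta_unit_def Aeta_std_basis sqnorm_std_basis one_smult_mat)

lemma continuous_on_Aeta_unit_line:
  assumes "\<And>x. \<exists>i<q. \<eta> i + x * \<zeta> i \<noteq> 0" and "j < p" "k < p"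
  shows "continuous_on UNIV (\<lambda>x. Aeta_unit p q A (\<lambda>i. \<eta> i + x * \<zeta> i) $$ (j, k))"
proof -
  have "0 < sqnorm q (\<lambda>i. \<eta> i + x * \<zeta> i)" for x
    by (rule sqnorm_pos[OF assms(1)])
  then have "sqrt (sqnorm q (\<lambda>i. \<eta> i + x * \<zeta> i)) \<noteq> 0" for x
    by (metis less_irrefl real_sqrt_eq_zero_cancel_iff)
  then show ?thesis
    using assms(2,3) unfolding Aeta_unit_def sqnorm_def
    by (auto simp: index_Aeta intro!: continuous_intros)
qed

lemma cubic_poly_eq_coeff1:
  fixes a0 a1 a2 a3 b0 b1 b2 b3 :: real
  assumes "\<And>z. a0 + a1 * z + a2 * z\<^sup>2 + a3 * z ^ 3 = b0 + b1 * z + b2 * z\<^sup>2 + b3 * z ^ 3"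
  shows "a1 = b1"
  using assms[of 1] assms[of "-1"] assms[of 2] assms[of "-2"] by simp

locale cubic_pencil =
  fixes p q :: nat and A :: "nat \<Rightarrow> real mat"
  assumes cube: "\<And>\<eta>. Aeta p q A \<eta> ^\<^sub>m 3 = sqnorm q \<eta> \<cdot>\<^sub>m Aeta p q A \<eta>"
begin

lemma Aeta_unit_cube:
  assumes "\<exists>i<q. \<eta> i \<noteq> 0"
  shows "Aeta_unit p q A \<eta> ^\<^sub>m 3 = Aeta_unit p q A \<eta>"
proof -
  define r where "r = sqrt (sqnorm q \<eta>)"
  have "0 < r" "r\<^sup>2 = sqnorm q \<eta>"
    using sqnorm_pos[OF assms] unfolding r_def by simp_all
  then have "(1 / r) ^ 3 * sqnorm q \<eta> = 1 / r"
    by (auto simp: power3_eq_cube power2_eq_square field_simps)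
  then show ?thesis
    unfolding Aeta_unit_def r_def[symmetric]
    by (simp add: pow_mat_smult[of _ p] cube smult_smult_mat)
qed

lemma eig_mult_Aeta_unit:
  assumes nz: "\<exists>i<q. \<eta> i \<noteq> 0"
  defines "M \<equiv> Aeta_unit p q A \<eta>"
  shows "eig_mult M 1 + eig_mult M (-1) + eig_mult M 0 = p"
    and "mat_trace M = real (eig_mult M 1) - real (eig_mult M (-1))"
    and "mat_trace (M * M) = real (eig_mult M 1) + real (eig_mult M (-1))"
  using eig_mult_cube_eq_self[OF Aeta_unit_carrier Aeta_unit_cube[OF nz]] unfolding M_def
  by simp_all

lemma mat_trace_Aeta_unit_eq:
  assumes "2 \<le> q" and "\<exists>i<q. \<eta> i \<noteq> 0" "\<exists>i<q. \<eta>' i \<noteq> 0"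
  shows "mat_trace (Aeta_unit p q A \<eta>) = mat_trace (Aeta_unit p q A \<eta>')"
    and "mat_trace (Aeta_unit p q A \<eta> * Aeta_unit p q A \<eta>)
      = mat_trace (Aeta_unit p q A \<eta>' * Aeta_unit p q A \<eta>')"
proof -
  note continuous_on_lines = continuous_on_mat_trace[OF Aeta_unit_carrier
      continuous_on_Aeta_unit_line[OF indep_pair_line_nonzero]]
  have trace_values:
    "mat_trace (Aeta_unit p q A \<eta>) \<in> (\<lambda>(a, b). real a - real b) ` ({..p} \<times> {..p})"
    "mat_trace (Aeta_unit p q A \<eta> * Aeta_unit p q A \<eta>) \<in> real ` {..p}"
    if "\<exists>i<q. \<eta> i \<noteq> 0" for \<eta>
  proof -
    let ?n = "eig_mult (Aeta_unit p q A \<eta>)"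
    from eig_mult_Aeta_unit[OF that]
    show "mat_trace (Aeta_unit p q A \<eta>) \<in> (\<lambda>(a, b). real a - real b) ` ({..p} \<times> {..p})"
      and "mat_trace (Aeta_unit p q A \<eta> * Aeta_unit p q A \<eta>) \<in> real ` {..p}"
      by (auto intro!: image_eqI[where x = "(?n 1, ?n (-1))"] image_eqI[where x = "?n 1 + ?n (-1)"])
  qed
  show "mat_trace (Aeta_unit p q A \<eta>) = mat_trace (Aeta_unit p q A \<eta>')"
    by (rule eq_on_nonzero[where F = "\<lambda>\<eta>. mat_trace (Aeta_unit p q A \<eta>)"
          and V = "(\<lambda>(a, b). real a - real b) ` ({..p} \<times> {..p})"])
      (use assms continuous_on_lines trace_values in auto)
  show "mat_trace (Aeta_unit p q A \<eta> * Aeta_unit p q A \<eta>)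
      = mat_trace (Aeta_unit p q A \<eta>' * Aeta_unit p q A \<eta>')"
    by (rule eq_on_nonzero[where F = "\<lambda>\<eta>. mat_trace (Aeta_unit p q A \<eta> * Aeta_unit p q A \<eta>)"
          and V = "real ` {..p}"])
      (use assms continuous_on_lines trace_values in auto)
qed

lemma mat_trace_Aeta_unit_zero:
  assumes "2 \<le> q" and nz: "\<exists>i<q. \<eta> i \<noteq> 0"
  shows "mat_trace (Aeta_unit p q A \<eta>) = 0"
proof -
  have "mat_trace (Aeta_unit p q A \<eta>) = mat_trace (Aeta_unit p q A (\<lambda>i. - \<eta> i))"
    using nz by (intro mat_trace_Aeta_unit_eq(1) assms) auto
  also have "\<dots> = - mat_trace (Aeta_unit p q A \<eta>)"
    by (simp add: Aeta_unit_uminus mat_trace_smult[of _ p])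
  finally show ?thesis by simp
qed

lemma eig_mult_Aeta_unit_const:
  assumes "2 \<le> q"
  obtains \<nu> \<mu> where "2 * \<nu> + \<mu> = p"
    and "\<And>\<eta>. \<exists>i<q. \<eta> i \<noteq> 0 \<Longrightarrow> eig_mult (Aeta_unit p q A \<eta>) 1 = \<nu>
      \<and> eig_mult (Aeta_unit p q A \<eta>) (-1) = \<nu> \<and> eig_mult (Aeta_unit p q A \<eta>) 0 = \<mu>"
proof -
  define M where "M \<eta> = Aeta_unit p q A \<eta>" for \<eta>
  have nz0: "\<exists>i<q. std_basis 0 i \<noteq> 0" using assms by (auto simp: std_basis_def)
  have balanced: "eig_mult (M \<eta>) 1 = eig_mult (M \<eta>) (-1)"
    and same_1: "eig_mult (M \<eta>) 1 = eig_mult (M (std_basis 0)) 1"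
    and same_0: "eig_mult (M \<eta>) 0 = eig_mult (M (std_basis 0)) 0"
    if nz: "\<exists>i<q. \<eta> i \<noteq> 0" for \<eta>
  proof -
    note e = eig_mult_Aeta_unit[OF nz, folded M_def]
      and e0 = eig_mult_Aeta_unit[OF nz0, folded M_def]
    have "mat_trace (M \<eta>) = 0" "mat_trace (M (std_basis 0)) = 0"
      unfolding M_def using assms nz nz0 by (auto intro: mat_trace_Aeta_unit_zero)
    moreover have "mat_trace (M \<eta> * M \<eta>) = mat_trace (M (std_basis 0) * M (std_basis 0))"
      unfolding M_def using assms nz nz0 by (rule mat_trace_Aeta_unit_eq(2))
    ultimately show "eig_mult (M \<eta>) 1 = eig_mult (M \<eta>) (-1)"
      and "eig_mult (M \<eta>) 1 = eig_mult (M (std_basis 0)) 1"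
      and "eig_mult (M \<eta>) 0 = eig_mult (M (std_basis 0)) 0"
      using e e0 by linarith+
  qed
  show ?thesis
  proof
    show "2 * eig_mult (M (std_basis 0)) 1 + eig_mult (M (std_basis 0)) 0 = p"
      using eig_mult_Aeta_unit(1)[OF nz0, folded M_def] balanced[OF nz0] by simp
  qed (use balanced same_1 same_0 in \<open>auto simp: M_def\<close>)
qed

lemma polarization:
  assumes orth: "inner_q q s t = 0"
  defines "X \<equiv> Aeta p q A s" and "Y \<equiv> Aeta p q A t"
  shows "X ^\<^sub>m 2 * Y + X * Y * X + Y * X ^\<^sub>m 2 = sqnorm q s \<cdot>\<^sub>m Y"
proof (rule eq_matI)
  have X: "X \<in> carrier_mat p p" and Y: "Y \<in> carrier_mat p p" unfolding X_def Y_def by simp_all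
  fix j k assume "j < dim_row (sqnorm q s \<cdot>\<^sub>m Y)" "k < dim_col (sqnorm q s \<cdot>\<^sub>m Y)"
  then have j: "j < p" and k: "k < p" using Y by auto
  define x y where "x a b = X $$ (a, b)" and "y a b = Y $$ (a, b)" for a b
  define c where "c P Q R = (\<Sum>l<p. \<Sum>m<p. P j l * Q l m * R m k)"
    for P Q R :: "nat \<Rightarrow> nat \<Rightarrow> real"
  have "c x x x + (c y x x + c x y x + c x x y) * z + (c y y x + c y x y + c x y y) * z\<^sup>2
        + c y y y * z ^ 3
      = sqnorm q s * x j k + sqnorm q s * y j k * z + sqnorm q t * x j k * z\<^sup>2
        + sqnorm q t * y j k * z ^ 3" for z
  proof -
    have XzY: "X + z \<cdot>\<^sub>m Y \<in> carrier_mat p p" using X Y by simp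
    have "(Aeta p q A (\<lambda>i. s i + z * t i) ^\<^sub>m 3) $$ (j, k)
        = (\<Sum>l<p. \<Sum>m<p. (x j l + z * y j l) * (x l m + z * y l m) * (x m k + z * y m k))"
      unfolding Aeta_line X_def[symmetric] Y_def[symmetric] pow_mat_3[OF XzY]
        index_mult3_mat[OF XzY XzY XzY j k]
      using X Y j k by (intro sum.cong refl) (simp add: x_def y_def)
    also have "\<dots> = c x x x + (c y x x + c x y x + c x x y) * z
        + (c y y x + c y x y + c x y y) * z\<^sup>2 + c y y y * z ^ 3"
      unfolding c_def
      by (simp add: sum.distrib sum_distrib_left algebra_simps power2_eq_square power3_eq_cube)
    finally show ?thesis
      using cube[of "\<lambda>i. s i + z * t i"] X Y j k orth
      unfolding Aeta_line X_def[symmetric] Y_def[symmetric] x_def y_def sqnorm_line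
      by (simp add: algebra_simps power2_eq_square power3_eq_cube)
  qed
  from cubic_poly_eq_coeff1[OF this]
  have "c y x x + c x y x + c x x y = sqnorm q s * y j k" .
  moreover have "(X * X * Y + X * Y * X + Y * X * X) $$ (j, k) = c y x x + c x y x + c x x y"
  proof -
    have "(X * X * Y + X * Y * X + Y * X * X) $$ (j, k)
        = (X * X * Y) $$ (j, k) + (X * Y * X) $$ (j, k) + (Y * X * X) $$ (j, k)"
      using X Y j k by simp
    then show ?thesis
      unfolding index_mult3_mat[OF X X Y j k] index_mult3_mat[OF X Y X j k]
        index_mult3_mat[OF Y X X j k]
      by (simp add: c_def x_def y_def add_ac)
  qed
  ultimately show "(X ^\<^sub>m 2 * Y + X * Y * X + Y * X ^\<^sub>m 2) $$ (j, k)
      = (sqnorm q s \<cdot>\<^sub>m Y) $$ (j, k)"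
    using X Y j k by (simp add: pow_mat_2[OF X] assoc_mult_mat[of Y p p X p X p] y_def)
qed (simp_all add: X_def Y_def)

end

theorem lemma3p1:
  fixes p q :: nat and A :: "nat \<Rightarrow> real mat"
  assumes "p \<ge> 1" and "q \<ge> 2"
    and carr: "\<And>i. i < q \<Longrightarrow> A i \<in> carrier_mat p p"
    and sym: "\<And>i. i < q \<Longrightarrow> transpose_mat (A i) = A i"
    and cube: "\<And>\<eta>. Aeta p q A \<eta> ^\<^sub>m 3 = sqnorm q \<eta> \<cdot>\<^sub>m Aeta p q A \<eta>"
  shows "(\<exists>\<nu> \<mu> :: nat. 2 * \<nu> + \<mu> = p \<and>
            (\<forall>\<eta>. (\<exists>i<q. \<eta> i \<noteq> 0) \<longrightarrow>
               (let M = (1 / sqrt (sqnorm q \<eta>)) \<cdot>\<^sub>m Aeta p q A \<eta> in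
                 eig_mult M 1 = \<nu> \<and> eig_mult M (-1) = \<nu> \<and> eig_mult M 0 = \<mu>)) \<and>
            (\<forall>i<q. eig_mult (A i) 1 = \<nu> \<and> eig_mult (A i) (-1) = \<nu> \<and> eig_mult (A i) 0 = \<mu>))
       \<and> (\<forall>i<q. mat_trace (A i) = 0)
       \<and> (\<forall>i<q. A i ^\<^sub>m 3 = A i)
       \<and> (\<forall>s t. inner_q q s t = 0 \<longrightarrow>
            Aeta p q A s ^\<^sub>m 2 * Aeta p q A t + Aeta p q A s * Aeta p q A t * Aeta p q A s
              + Aeta p q A t * Aeta p q A s ^\<^sub>m 2 = sqnorm q s \<cdot>\<^sub>m Aeta p q A t)"
proof -
  interpret cubic_pencil p q A by unfold_locales (rule cube)
  have nz: "\<exists>j<q. std_basis i j \<noteq> 0" if "i < q" for i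
    using that by (auto simp: std_basis_def)
  have A_unit: "Aeta_unit p q A (std_basis i) = A i" if "i < q" for i
    using that carr[OF that] by (rule Aeta_unit_std_basis)
  obtain \<nu> \<mu> where "2 * \<nu> + \<mu> = p"
    and mult: "\<And>\<eta>. \<exists>i<q. \<eta> i \<noteq> 0 \<Longrightarrow> eig_mult (Aeta_unit p q A \<eta>) 1 = \<nu>
      \<and> eig_mult (Aeta_unit p q A \<eta>) (-1) = \<nu> \<and> eig_mult (Aeta_unit p q A \<eta>) 0 = \<mu>"
    using eig_mult_Aeta_unit_const[OF \<open>q \<ge> 2\<close>] by blast
  moreover have "\<forall>i<q. eig_mult (A i) 1 = \<nu> \<and> eig_mult (A i) (-1) = \<nu> \<and> eig_mult (A i) 0 = \<mu>"
    using mult[OF nz] A_unit by simp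
  moreover have "\<forall>i<q. mat_trace (A i) = 0"
    using mat_trace_Aeta_unit_zero[OF \<open>q \<ge> 2\<close> nz] A_unit by simp
  moreover have "\<forall>i<q. A i ^\<^sub>m 3 = A i"
    using Aeta_unit_cube[OF nz] A_unit by simp
  ultimately show ?thesis
    unfolding Let_def Aeta_unit_def[symmetric] using polarization by blast
qed

end
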